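(* Let $\mathcal{N}=(N,M_0)$ be a two-level PT-net system with transitions partitioned into low-level $L$ and high-level $H$. Then $\mathcal{N}$ has the property SBNDC if and only if $P(h,l)$ holds for every $h\in H$ and every $l\in L$.
   Context: A PT-net is $N=(P,T,F)$ with $P,T$ finite disjoint and $F:(P\times T)\cup(T\times P)\to\mathbb{N}$; markings $M:P\to\mathbb{N}$; $t$ enabled at $M$ ($M[t\rangle$) iff $M(p)\ge F(p,t)$ for all $p$, firing gives $M'(p)=M(p)+F(t,p)-F(p,t)$ ($M[t\rangle M'$); extended to sequences. Reachable markings are those $M$ with $M_0[s\rangle M$. $N\setminus H$ deletes the transitions of $H$. Two net systems all of whose transitions are observable are weakly bisimilar if there is a relation $R$ between their reachable markings containing the initial pair such that for $(M,M')\in R$ each step $M[t\rangle M''$ is matched by $M'[t\rangle M'''$ with $(M'',M''')\in R$, and symmetrically. SBNDC: for every reachable marking $M_1$ of $\mathcal{N}$ and every $h\in H$, $M_1[h\rangle M_2$ implies that $(N\setminus H,M_1)$ and $(N\setminus H,M_2)$ are weakly bisimilar. For $h\in H$, $l\in L$, $P(h,l)$ holds iff for all words $s\in L^*$ and $w\in(L\cup H)^*$: if $M_0[w\rangle M_1$, $M_1[h\rangle M_2$, $M_1[s\rangle M_3$ and $M_2[s\rangle M_4$, then $M_3[l\rangle$ iff $M_4[l\rangle$. *)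

theory Defs
  imports Main
begin

text \<open>A PT-net N = (P, T, F). The flow function F on (P x T) u (T x P) is split into
  pre t p = F(p,t) and post t p = F(t,p). Places and transitions live in different
  types, hence are disjoint.\<close>

record ('p, 't) ptnet =
  places :: "'p set"
  trans  :: "'t set"
  pre    :: "'t \<Rightarrow> 'p \<Rightarrow> nat"
  post   :: "'t \<Rightarrow> 'p \<Rightarrow> nat"

definition is_ptnet :: "('p, 't) ptnet \<Rightarrow> bool" where
  "is_ptnet N \<longleftrightarrow> finite (places N) \<and> finite (trans N)"

definition markings :: "('p, 't) ptnet \<Rightarrow> ('p \<Rightarrow> nat) set" where
  "markings N = {M. \<forall>p. p \<notin> places N \<longrightarrow> M p = 0}"

definition enabled :: "('p, 't) ptnet \<Rightarrow> ('p \<Rightarrow> nat) \<Rightarrow> 't \<Rightarrow> bool" where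
  "enabled N M t \<longleftrightarrow> t \<in> trans N \<and> (\<forall>p\<in>places N. pre N t p \<le> M p)"

definition fire :: "('p, 't) ptnet \<Rightarrow> ('p \<Rightarrow> nat) \<Rightarrow> 't \<Rightarrow> ('p \<Rightarrow> nat) \<Rightarrow> bool" where
  "fire N M t M' \<longleftrightarrow> enabled N M t \<and>
     M' = (\<lambda>p. if p \<in> places N then M p + post N t p - pre N t p else 0)"

fun fire_seq :: "('p, 't) ptnet \<Rightarrow> ('p \<Rightarrow> nat) \<Rightarrow> 't list \<Rightarrow> ('p \<Rightarrow> nat) \<Rightarrow> bool" where
  "fire_seq N M [] M' \<longleftrightarrow> M' = M"
| "fire_seq N M (t # s) M' \<longleftrightarrow> (\<exists>M''. fire N M t M'' \<and> fire_seq N M'' s M')"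

definition reachable :: "('p, 't) ptnet \<Rightarrow> ('p \<Rightarrow> nat) \<Rightarrow> ('p \<Rightarrow> nat) \<Rightarrow> bool" where
  "reachable N M0 M \<longleftrightarrow> (\<exists>s. fire_seq N M0 s M)"

definition delete_trans :: "('p, 't) ptnet \<Rightarrow> 't set \<Rightarrow> ('p, 't) ptnet" where
  "delete_trans N H = N\<lparr>trans := trans N - H\<rparr>"

text \<open>Weak bisimilarity of net systems all of whose transitions are observable.\<close>
definition weakly_bisimilar ::
  "('p, 't) ptnet \<Rightarrow> ('p \<Rightarrow> nat) \<Rightarrow> ('q, 't) ptnet \<Rightarrow> ('q \<Rightarrow> nat) \<Rightarrow> bool" where
  "weakly_bisimilar N1 M01 N2 M02 \<longleftrightarrow>
     (\<exists>R. R \<subseteq> {M. reachable N1 M01 M} \<times> {M. reachable N2 M02 M} \<and>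
          (M01, M02) \<in> R \<and>
          (\<forall>(M, M') \<in> R. \<forall>t M''. fire N1 M t M'' \<longrightarrow>
              (\<exists>M'''. fire N2 M' t M''' \<and> (M'', M''') \<in> R)) \<and>
          (\<forall>(M, M') \<in> R. \<forall>t M'''. fire N2 M' t M''' \<longrightarrow>
              (\<exists>M''. fire N1 M t M'' \<and> (M'', M''') \<in> R)))"

definition SBNDC :: "('p, 't) ptnet \<Rightarrow> ('p \<Rightarrow> nat) \<Rightarrow> 't set \<Rightarrow> bool" where
  "SBNDC N M0 H \<longleftrightarrow>
     (\<forall>M1. reachable N M0 M1 \<longrightarrow> (\<forall>h\<in>H. \<forall>M2. fire N M1 h M2 \<longrightarrow>
        weakly_bisimilar (delete_trans N H) M1 (delete_trans N H) M2))"

definition P_prop ::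
  "('p, 't) ptnet \<Rightarrow> ('p \<Rightarrow> nat) \<Rightarrow> 't set \<Rightarrow> 't set \<Rightarrow> 't \<Rightarrow> 't \<Rightarrow> bool" where
  "P_prop N M0 L H h l \<longleftrightarrow>
     (\<forall>s w M1 M2 M3 M4. set s \<subseteq> L \<longrightarrow> set w \<subseteq> L \<union> H \<longrightarrow>
        fire_seq N M0 w M1 \<longrightarrow> fire N M1 h M2 \<longrightarrow>
        fire_seq N M1 s M3 \<longrightarrow> fire_seq N M2 s M4 \<longrightarrow>
        (enabled N M3 l \<longleftrightarrow> enabled N M4 l))"

end

theory Submission
  imports Defs
begin

text \<open>Firing in a PT-net is deterministic, so bisimilarity (which is strong bisimilarity here,
  all transitions being observable) coincides with trace equivalence: two markings are bisimilar
  iff every sequence fireable from both leads to markings enabling the same transitions. In the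
  net with the high transitions deleted, the common sequences are exactly the low words s and the
  enabled transitions are low, so this condition, taken at every reachable M1 and every high step
  M1 [h> M2, is literally P(h,l) for all h and l.\<close>

lemma fire_deterministic: "fire N M t M' \<Longrightarrow> fire N M t M'' \<Longrightarrow> M' = M''"
  by (simp add: fire_def)

lemma enabled_iff_ex_fire: "enabled N M t \<longleftrightarrow> (\<exists>M'. fire N M t M')"
  by (simp add: fire_def)

lemma fire_seq_snoc:
  "fire_seq N M (s @ [t]) M' \<longleftrightarrow> (\<exists>M''. fire_seq N M s M'' \<and> fire N M'' t M')"
  by (induction s arbitrary: M) auto

lemma fire_seq_subset_trans: "fire_seq N M s M' \<Longrightarrow> set s \<subseteq> trans N"
  by (induction s arbitrary: M) (auto simp: fire_def enabled_def)

lemma enabled_delete_trans_iff: "enabled (delete_trans N H) M t \<longleftrightarrow> t \<notin> H \<and> enabled N M t"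
  by (auto simp: enabled_def delete_trans_def)

lemma fire_delete_trans_iff: "fire (delete_trans N H) M t M' \<longleftrightarrow> t \<notin> H \<and> fire N M t M'"
  by (auto simp: fire_def enabled_def delete_trans_def)

lemma fire_seq_delete_trans_iff:
  "fire_seq (delete_trans N H) M s M' \<longleftrightarrow> set s \<inter> H = {} \<and> fire_seq N M s M'"
  by (induction s arbitrary: M) (auto simp: fire_delete_trans_iff)

lemma weakly_bisimilar_imp_enabled_eq:
  assumes "weakly_bisimilar N1 M1 N2 M2"
    and "fire_seq N1 M1 s M3" and "fire_seq N2 M2 s M4"
  shows "enabled N1 M3 t \<longleftrightarrow> enabled N2 M4 t"
proof -
  obtain R where "(M1, M2) \<in> R"
    and forward: "\<And>M M' t M''. (M, M') \<in> R \<Longrightarrow> fire N1 M t M'' \<Longrightarrow>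
                  \<exists>M'''. fire N2 M' t M''' \<and> (M'', M''') \<in> R"
    and backward: "\<And>M M' t M'''. (M, M') \<in> R \<Longrightarrow> fire N2 M' t M''' \<Longrightarrow>
                  \<exists>M''. fire N1 M t M'' \<and> (M'', M''') \<in> R"
    using assms(1) unfolding weakly_bisimilar_def by (auto simp: Ball_def)
  have related: "(M3, M4) \<in> R"
    using assms(2,3)
  proof (induction s arbitrary: M3 M4 rule: rev_induct)
    case Nil
    with \<open>(M1, M2) \<in> R\<close> show ?case by simp
  next
    case (snoc t s)
    then obtain M3' M4' where "fire_seq N1 M1 s M3'" "fire N1 M3' t M3"
      and "fire_seq N2 M2 s M4'" "fire N2 M4' t M4"
      by (auto simp: fire_seq_snoc)
    with snoc.IH forward show ?case
      by (metis fire_deterministic)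
  qed
  show ?thesis
  proof
    assume "enabled N1 M3 t"
    then obtain M3' where "fire N1 M3 t M3'"
      by (auto simp: enabled_iff_ex_fire)
    with forward[OF related] show "enabled N2 M4 t"
      by (auto simp: enabled_iff_ex_fire)
  next
    assume "enabled N2 M4 t"
    then obtain M4' where "fire N2 M4 t M4'"
      by (auto simp: enabled_iff_ex_fire)
    with backward[OF related] show "enabled N1 M3 t"
      by (auto simp: enabled_iff_ex_fire)
  qed
qed

lemma enabled_eq_imp_weakly_bisimilar:
  assumes "\<And>s M3 M4 t. fire_seq N1 M1 s M3 \<Longrightarrow> fire_seq N2 M2 s M4 \<Longrightarrow>
             enabled N1 M3 t \<longleftrightarrow> enabled N2 M4 t"
  shows "weakly_bisimilar N1 M1 N2 M2"
proof -
  define R where "R = {(M3, M4). \<exists>s. fire_seq N1 M1 s M3 \<and> fire_seq N2 M2 s M4}"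
  have extend: "(M3', M4') \<in> R"
    if "(M3, M4) \<in> R" "fire N1 M3 t M3'" "fire N2 M4 t M4'" for M3 M4 t M3' M4'
  proof -
    from \<open>(M3, M4) \<in> R\<close> obtain s where "fire_seq N1 M1 s M3" "fire_seq N2 M2 s M4"
      by (auto simp: R_def)
    with that(2,3) show ?thesis
      unfolding R_def by (auto intro!: exI[of _ "s @ [t]"] simp: fire_seq_snoc)
  qed
  have enabled_eq: "enabled N1 M3 t \<longleftrightarrow> enabled N2 M4 t" if "(M3, M4) \<in> R" for M3 M4 t
    using that assms by (auto simp: R_def)
  show ?thesis
    unfolding weakly_bisimilar_def
  proof (intro exI conjI)
    show "R \<subseteq> {M. reachable N1 M1 M} \<times> {M. reachable N2 M2 M}"
      by (auto simp: R_def reachable_def)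
    show "(M1, M2) \<in> R"
      by (auto simp: R_def intro: exI[of _ "[]"])
    show "\<forall>(M, M')\<in>R. \<forall>t M''. fire N1 M t M'' \<longrightarrow> (\<exists>M'''. fire N2 M' t M''' \<and> (M'', M''') \<in> R)"
      using extend enabled_eq by (fastforce simp: enabled_iff_ex_fire)
    show "\<forall>(M, M')\<in>R. \<forall>t M'''. fire N2 M' t M''' \<longrightarrow> (\<exists>M''. fire N1 M t M'' \<and> (M'', M''') \<in> R)"
      using extend enabled_eq by (fastforce simp: enabled_iff_ex_fire)
  qed
qed

lemma weakly_bisimilar_iff_enabled_eq:
  "weakly_bisimilar N1 M1 N2 M2 \<longleftrightarrow>
     (\<forall>s M3 M4 t. fire_seq N1 M1 s M3 \<longrightarrow> fire_seq N2 M2 s M4 \<longrightarrow>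
        (enabled N1 M3 t \<longleftrightarrow> enabled N2 M4 t))"
  using weakly_bisimilar_imp_enabled_eq enabled_eq_imp_weakly_bisimilar by metis

lemma weakly_bisimilar_delete_trans_iff:
  assumes "L \<inter> H = {}" and "L \<union> H = trans N"
  shows "weakly_bisimilar (delete_trans N H) M1 (delete_trans N H) M2 \<longleftrightarrow>
     (\<forall>s M3 M4 l. set s \<subseteq> L \<longrightarrow> fire_seq N M1 s M3 \<longrightarrow> fire_seq N M2 s M4 \<longrightarrow> l \<in> L \<longrightarrow>
        (enabled N M3 l \<longleftrightarrow> enabled N M4 l))"
proof -
  have low_word: "set s \<inter> H = {} \<and> fire_seq N M s M' \<longleftrightarrow> set s \<subseteq> L \<and> fire_seq N M s M'"
    for s M M'
    using fire_seq_subset_trans[of N M s M'] assms by blast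
  have low_trans: "(t \<notin> H \<and> enabled N M t) \<longleftrightarrow> (t \<in> L \<and> enabled N M t)" for t M
    using assms by (auto simp: enabled_def)
  show ?thesis
    unfolding weakly_bisimilar_iff_enabled_eq fire_seq_delete_trans_iff enabled_delete_trans_iff
      low_word low_trans
    by blast
qed

theorem proposition6:
  fixes N :: "('p, 't) ptnet" and M0 :: "'p \<Rightarrow> nat" and L H :: "'t set"
  assumes "is_ptnet N"
    and "M0 \<in> markings N"
    and "L \<inter> H = {}"
    and "L \<union> H = trans N"
  shows "SBNDC N M0 H \<longleftrightarrow> (\<forall>h\<in>H. \<forall>l\<in>L. P_prop N M0 L H h l)"
proof -
  have reachable_iff: "reachable N M0 M1 \<longleftrightarrow> (\<exists>w. set w \<subseteq> L \<union> H \<and> fire_seq N M0 w M1)" for M1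
    using fire_seq_subset_trans assms(4) by (metis reachable_def)
  show ?thesis
    unfolding SBNDC_def P_prop_def reachable_iff
      weakly_bisimilar_delete_trans_iff[OF assms(3,4)]
    by blast
qed

end
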